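(* Let $m\ge2$, $n\ge1$. For every injective group homomorphism $\rho:BS(1,m)\to T_n(\mathbb Z[1/m])$, the group $\rho(BS(1,m))$ has the congruence subgroup property.
   Context: $BS(1,m)=\langle a,t\mid tat^{-1}=a^m\rangle$. $T_n(\mathbb Z[1/m])$ is the group of invertible upper triangular $n\times n$ matrices with entries in $\mathbb Z[1/m]$. For a subgroup $G\le GL_n(\mathbb Z[1/m])$ and an integer $N>0$ coprime to $m$, the congruence subgroup $G(N)$ is $G\cap\ker\big(GL_n(\mathbb Z[1/m])\to GL_n(\mathbb Z/N\mathbb Z)\big)$ (reduction modulo $N$, using $\mathbb Z[1/m]/N\mathbb Z[1/m]\cong\mathbb Z/N\mathbb Z$). $G$ has the congruence subgroup property (CSP) if every finite-index subgroup of $G$ contains $G(N)$ for some $N>0$ coprime to $m$. *)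

theory Defs
  imports "Jordan_Normal_Form.Matrix" "HOL-Algebra.Coset"
begin

definition zinv :: "nat \<Rightarrow> rat set" where
  "zinv m = {q. \<exists>(a::int) (k::nat). q = of_int a / (of_nat m) ^ k}"

definition entries_in :: "rat set \<Rightarrow> nat \<Rightarrow> rat mat \<Rightarrow> bool" where
  "entries_in R n A = (\<forall>i<n. \<forall>j<n. A $$ (i,j) \<in> R)"

definition GLn_zinv :: "nat \<Rightarrow> nat \<Rightarrow> rat mat set" where
  "GLn_zinv m n = {A. A \<in> carrier_mat n n \<and> entries_in (zinv m) n A \<and>
      (\<exists>B. B \<in> carrier_mat n n \<and> entries_in (zinv m) n B \<and>
           A * B = 1\<^sub>m n \<and> B * A = 1\<^sub>m n)}"

definition Tn_zinv :: "nat \<Rightarrow> nat \<Rightarrow> rat mat set" where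
  "Tn_zinv m n = {A \<in> GLn_zinv m n. upper_triangular A}"

definition mat_grp :: "nat \<Rightarrow> rat mat set \<Rightarrow> rat mat monoid" where
  "mat_grp n G = \<lparr>carrier = G, mult = (*), one = 1\<^sub>m n\<rparr>"

text \<open>Congruence subgroup G(N): kernel of reduction mod N, i.e. all entries of g - I
  lie in N Z[1/m].\<close>

definition cong_subgroup :: "nat \<Rightarrow> nat \<Rightarrow> nat \<Rightarrow> rat mat set \<Rightarrow> rat mat set" where
  "cong_subgroup m n N G = {g \<in> G. \<forall>i<n. \<forall>j<n.
      (g $$ (i,j) - (1\<^sub>m n) $$ (i,j)) / of_nat N \<in> zinv m}"

definition has_CSP :: "nat \<Rightarrow> nat \<Rightarrow> rat mat set \<Rightarrow> bool" where
  "has_CSP m n G = (\<forall>H. subgroup H (mat_grp n G) \<and> finite (rcosets\<^bsub>mat_grp n G\<^esub> H) \<longrightarrow>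
      (\<exists>N>0. coprime N m \<and> cong_subgroup m n N G \<subseteq> H))"

section \<open>BS(1,m) by its presentation <a,t | t a t^-1 = a^m>\<close>

text \<open>A letter is (is_t, is_inverse): (False,False)=a, (False,True)=a^-1,
  (True,False)=t, (True,True)=t^-1. Words are lists of letters.\<close>

type_synonym letter = "bool \<times> bool"

inductive bs_eq :: "nat \<Rightarrow> letter list \<Rightarrow> letter list \<Rightarrow> bool" for m where
  refl: "bs_eq m u u"
| sym: "bs_eq m u v \<Longrightarrow> bs_eq m v u"
| trans: "bs_eq m u v \<Longrightarrow> bs_eq m v w \<Longrightarrow> bs_eq m u w"
| cancel: "bs_eq m (u @ [(g,e),(g,\<not>e)] @ v) (u @ v)"
| relator: "bs_eq m (u @ [(True,False),(False,False),(True,True)] @ v)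
                    (u @ replicate m (False,False) @ v)"

text \<open>Evaluation of a word under the homomorphism sending a to A and t to T
  (Ai, Ti are the inverses of A, T).\<close>

definition letter_eval :: "rat mat \<Rightarrow> rat mat \<Rightarrow> rat mat \<Rightarrow> rat mat \<Rightarrow> letter \<Rightarrow> rat mat" where
  "letter_eval A Ai T Ti l = (case l of (False,False) \<Rightarrow> A | (False,True) \<Rightarrow> Ai
      | (True,False) \<Rightarrow> T | (True,True) \<Rightarrow> Ti)"

definition word_eval :: "nat \<Rightarrow> rat mat \<Rightarrow> rat mat \<Rightarrow> rat mat \<Rightarrow> rat mat \<Rightarrow> letter list \<Rightarrow> rat mat" where
  "word_eval n A Ai T Ti w = foldr (\<lambda>l M. letter_eval A Ai T Ti l * M) w (1\<^sub>m n)"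

end

theory Submission
  imports Defs "HOL-Algebra.Generated_Groups"
begin

(* Write a = A and t = T. A subgroup H of finite index contains x^D for all x and some D > 0,
   and every element of the image is t^-k a^j t^b. Since a is conjugate to a^m, the diagonal
   entries of A satisfy x^m = x, so they are 1 or -1; hence U = A^2 is unipotent, and U is not
   the identity because the representation is injective. If u is a nonzero entry, at (i, i+s),
   on the first nonzero superdiagonal of U, then t U t^-1 = U^m forces T_ii / T_(i+s)(i+s) = m.
   If g = t^-k a^j t^b lies in the congruence subgroup G(N), so does h = a^j t^e with e = b - k;
   comparing the diagonal entries of h at i and i+s gives m^(2e) = 1 mod N, and the commutator
   [h, t] = a^(j(1-m)) gives j(m-1)u = 0 mod N. For N = (m^(2D) - 1) N', with N' the part prime
   to m of D(m-1)(numerator of u), these congruences yield D | e and D | j m^R for some R, hence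
   t^e and t^-k a^j t^k lie in H, and so does g. *)

section \<open>Group theory\<close>

lemma finite_index_subgroup_contains_powers:
  fixes G (structure)
  assumes G: "group G" and H: "subgroup H G" and fin: "finite (rcosets\<^bsub>G\<^esub> H)"
  shows "\<exists>D>0. \<forall>x\<in>carrier G. x [^]\<^bsub>G\<^esub> (D::nat) \<in> H"
proof -
  interpret group G by fact
  interpret subgroup H G by fact
  define r where "r = card (rcosets H)"
  have some_power: "\<exists>e. 0 < e \<and> e \<le> r \<and> x [^] e \<in> H" if x: "x \<in> carrier G" for x
  proof -
    define f where "f k = H #> x [^] (k::nat)" for k
    have "f ` {..r} \<subseteq> rcosets H" unfolding f_def using x by (auto intro!: rcosetsI)
    hence "card (f ` {..r}) \<le> r" unfolding r_def using fin by (simp add: card_mono)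
    hence "\<not> inj_on f {..r}" using card_image by fastforce
    then obtain a b where "a \<le> r" "b \<le> r" "a \<noteq> b" "f a = f b" unfolding inj_on_def by auto
    then obtain a b where ab: "a \<le> r" "b \<le> r" "a < b" "f a = f b"
      by (metis linorder_neqE_nat)
    have "x [^] b \<in> H #> x [^] a" using ab(4) rcos_self[of "x [^] b" H] x unfolding f_def
      by (simp add: subgroup_axioms)
    hence "x [^] b \<otimes> inv (x [^] a) \<in> H" using rcos_module_imp[OF G] x by auto
    moreover have "x [^] b = x [^] (b - a) \<otimes> x [^] a" using ab(3) x
      by (simp add: nat_pow_mult)
    ultimately have "x [^] (b - a) \<in> H" using x
      by (metis inv_solve_right nat_pow_closed)
    thus ?thesis using ab by (intro exI[of _ "b - a"]) auto
  qed
  show ?thesis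
  proof (intro exI[of _ "fact r"] conjI ballI)
    show "0 < (fact r::nat)" by simp
    fix x assume x: "x \<in> carrier G"
    obtain e where e: "0 < e" "e \<le> r" "x [^] e \<in> H" using some_power[OF x] by blast
    have "e dvd fact r" using e by (simp add: dvd_fact)
    then obtain q where q: "fact r = e * q" by (elim dvdE)
    have "x [^] (fact r::nat) = (x [^] e) [^] (int q)" using x q by (simp add: nat_pow_pow int_pow_int)
    also have "\<dots> \<in> H" by (rule subgroup_int_pow_closed[OF H e(3)])
    finally show "x [^] (fact r::nat) \<in> H" .
  qed
qed

lemma (in group) conj_nat_pow:
  assumes g: "g \<in> carrier G" and x: "x \<in> carrier G"
  shows "(g \<otimes> x \<otimes> inv g) [^] (k::nat) = g \<otimes> x [^] k \<otimes> inv g"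
proof (induct k)
  case 0 thus ?case using g by (simp only: nat_pow_0 r_one r_inv)
next
  case (Suc k)
  have "(g \<otimes> x \<otimes> inv g) [^] Suc k = g \<otimes> x [^] k \<otimes> (inv g \<otimes> g) \<otimes> x \<otimes> inv g"
    using Suc g x by (simp only: nat_pow_Suc m_assoc m_closed inv_closed nat_pow_closed)
  also have "\<dots> = g \<otimes> x [^] Suc k \<otimes> inv g"
    using g x by (simp only: l_inv r_one m_assoc m_closed inv_closed nat_pow_closed nat_pow_Suc)
  finally show ?case .
qed

lemma (in group) conj_int_pow:
  assumes g: "g \<in> carrier G" and x: "x \<in> carrier G"
  shows "(g \<otimes> x \<otimes> inv g) [^] (j::int) = g \<otimes> x [^] j \<otimes> inv g"
proof (cases "j < 0")
  case False
  thus ?thesis using conj_nat_pow[OF g x, of "nat j"] by (simp only: int_pow_def2 if_False)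
next
  case True
  have "(g \<otimes> x \<otimes> inv g) [^] j = inv (g \<otimes> x [^] nat (- j) \<otimes> inv g)"
    using True conj_nat_pow[OF g x] by (simp only: int_pow_def2 if_True)
  also have "\<dots> = inv (inv g) \<otimes> inv (x [^] nat (- j)) \<otimes> inv g"
    using g x by (simp only: inv_mult_group m_closed inv_closed nat_pow_closed m_assoc)
  also have "\<dots> = g \<otimes> x [^] j \<otimes> inv g" using True g by (simp only: int_pow_def2 if_True inv_inv)
  finally show ?thesis .
qed

section \<open>Triangular and unipotent matrices\<close>

lemma sum_lessThan_eq_single:
  fixes f :: "nat \<Rightarrow> 'a::comm_monoid_add"
  assumes "i < n" "\<And>p. p < n \<Longrightarrow> p \<noteq> i \<Longrightarrow> f p = 0"
  shows "(\<Sum>p<n. f p) = f i"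
  using sum.mono_neutral_right[of "{..<n}" "{i}" f] assms by auto

lemma sum_lessThan_eq_two:
  fixes f :: "nat \<Rightarrow> 'a::comm_monoid_add"
  assumes "a < n" "b < n" "a \<noteq> b" "\<And>r. r < n \<Longrightarrow> r \<noteq> a \<Longrightarrow> r \<noteq> b \<Longrightarrow> f r = 0"
  shows "(\<Sum>r<n. f r) = f a + f b"
  using sum.mono_neutral_right[of "{..<n}" "{a, b}" f] assms by auto

lemma index_mult_mat_sum:
  assumes "A \<in> carrier_mat n n" "B \<in> carrier_mat n n" "i < n" "j < n"
  shows "(A * B) $$ (i,j) = (\<Sum>p<n. A $$ (i,p) * B $$ (p,j))"
  using assms by (simp add: scalar_prod_def atLeast0LessThan)

lemma upper_triangular_mult:
  assumes A: "A \<in> carrier_mat n n" and B: "B \<in> carrier_mat n n"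
    and uA: "upper_triangular A" and uB: "upper_triangular B"
  shows "upper_triangular (A * B)"
proof (rule upper_triangularI)
  fix i j assume ij: "j < i" "i < dim_row (A * B)"
  hence "i < n" "j < n" using A by auto
  have "A $$ (i,p) * B $$ (p,j) = 0" if "p < n" for p
    using ij A B uA uB that by (cases "p < i") (auto simp: upper_triangular_def)
  thus "(A * B) $$ (i,j) = 0" using index_mult_mat_sum[OF A B \<open>i < n\<close> \<open>j < n\<close>] by simp
qed

lemma upper_triangular_mult_diag:
  assumes A: "A \<in> carrier_mat n n" and B: "B \<in> carrier_mat n n"
    and uA: "upper_triangular A" and uB: "upper_triangular B" and i: "i < n"
  shows "(A * B) $$ (i,i) = A $$ (i,i) * B $$ (i,i)"
  unfolding index_mult_mat_sum[OF A B i i]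
proof (rule sum_lessThan_eq_single[OF i])
  fix p assume "p < n" "p \<noteq> i"
  thus "A $$ (i,p) * B $$ (p,i) = 0" using A B uA uB i
    by (cases "p < i") (auto simp: upper_triangular_def)
qed

lemma upper_triangular_right_inverse:
  fixes A B :: "'a::field mat"
  assumes A: "A \<in> carrier_mat n n" and B: "B \<in> carrier_mat n n"
    and uA: "upper_triangular A" and AB: "A * B = 1\<^sub>m n"
  shows "upper_triangular B"
proof -
  have "\<forall>j<i. B $$ (i,j) = 0" if "i < n" for i
    using that
  proof (induct "n - i" arbitrary: i rule: less_induct)
    case (less i)
    have below: "B $$ (p,j) = 0" if "i < p" "p < n" "j < p" for p j
      using less(1)[of p] that by auto
    have row: "(A * B) $$ (i,j) = A $$ (i,i) * B $$ (i,j)" if j: "j \<le> i" for j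
      unfolding index_mult_mat_sum[OF A B less(2) order.strict_trans1[OF j less(2)]]
    proof (rule sum_lessThan_eq_single[OF less(2)])
      fix p assume "p < n" "p \<noteq> i"
      thus "A $$ (i,p) * B $$ (p,j) = 0" using uA A less(2) below[of p j] j
        by (cases "p < i") (auto simp: upper_triangular_def)
    qed
    have "A $$ (i,i) \<noteq> 0" using row[of i] AB less(2) by auto
    moreover have "A $$ (i,i) * B $$ (i,j) = 0" if "j < i" for j
      using row[of j] AB less(2) that by simp
    ultimately show ?case by simp
  qed
  thus ?thesis using B by (auto simp: upper_triangular_def)
qed

definition unipotent_depth :: "nat \<Rightarrow> nat \<Rightarrow> 'a::comm_ring_1 mat \<Rightarrow> bool" where
  "unipotent_depth n s X \<longleftrightarrow> (\<forall>p<n. \<forall>q<n. q < p + s \<longrightarrow> X $$ (p,q) = (if p = q then 1 else 0))"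

lemma unipotent_depth_mult:
  assumes s: "s \<ge> 1" and X: "X \<in> carrier_mat n n" and Y: "Y \<in> carrier_mat n n"
    and sX: "unipotent_depth n s X" and sY: "unipotent_depth n s Y"
  shows "unipotent_depth n s (X * Y)"
  unfolding unipotent_depth_def
proof (intro allI impI)
  fix p q assume pq: "p < n" "q < n" "q < p + s"
  have "(X * Y) $$ (p,q) = X $$ (p,q) * Y $$ (q,q)"
    unfolding index_mult_mat_sum[OF X Y pq(1,2)]
  proof (rule sum_lessThan_eq_single[OF pq(2)])
    fix r assume "r < n" "r \<noteq> q"
    thus "X $$ (p,r) * Y $$ (r,q) = 0" using sX sY pq unfolding unipotent_depth_def
      by (cases "r < p") auto
  qed
  thus "(X * Y) $$ (p,q) = (if p = q then 1 else 0)" using sX sY pq s unfolding unipotent_depth_def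
    by auto
qed

lemma unipotent_depth_mult_entry:
  assumes s: "s \<ge> 1" and X: "X \<in> carrier_mat n n" and Y: "Y \<in> carrier_mat n n"
    and sX: "unipotent_depth n s X" and sY: "unipotent_depth n s Y" and i: "i + s < n"
  shows "(X * Y) $$ (i, i + s) = X $$ (i, i + s) + Y $$ (i, i + s)"
proof -
  have "(X * Y) $$ (i, i + s) = (\<Sum>r<n. X $$ (i,r) * Y $$ (r, i + s))"
    using i by (intro index_mult_mat_sum[OF X Y]) auto
  also have "\<dots> = X $$ (i,i) * Y $$ (i, i + s) + X $$ (i, i + s) * Y $$ (i + s, i + s)"
    using i
  proof (intro sum_lessThan_eq_two)
    fix r assume "r < n" "r \<noteq> i" "r \<noteq> i + s"
    thus "X $$ (i,r) * Y $$ (r, i + s) = 0" using sX sY i unfolding unipotent_depth_def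
      by (cases "r < i + s") auto
  qed (use s in auto)
  finally show ?thesis using sX sY i s unfolding unipotent_depth_def by auto
qed

lemma unipotent_depth_pow:
  assumes s: "s \<ge> 1" and U: "U \<in> carrier_mat n n" and sU: "unipotent_depth n s U"
  shows "unipotent_depth n s (U ^\<^sub>m k)"
proof (induct k)
  case 0
  thus ?case using U s by (auto simp: unipotent_depth_def)
next
  case (Suc k)
  thus ?case using unipotent_depth_mult[OF s _ U _ sU] U by simp
qed

lemma unipotent_depth_pow_entry:
  assumes s: "s \<ge> 1" and U: "U \<in> carrier_mat n n" and sU: "unipotent_depth n s U"
    and i: "i + s < n"
  shows "(U ^\<^sub>m k) $$ (i, i + s) = of_nat k * U $$ (i, i + s)"
proof (induct k)
  case 0
  thus ?case using U s i by simp
next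
  case (Suc k)
  thus ?case using unipotent_depth_mult_entry[OF s _ U unipotent_depth_pow[OF s U sU] sU i] U
    by (simp add: algebra_simps)
qed

lemma upper_triangular_conj_entry:
  assumes X: "X \<in> carrier_mat n n" and Y: "Y \<in> carrier_mat n n" and U: "U \<in> carrier_mat n n"
    and uX: "upper_triangular X" and uY: "upper_triangular Y"
    and sU: "unipotent_depth n s U" and s: "s \<ge> 1" and i: "i + s < n"
  shows "(X * U * Y) $$ (i, i + s)
    = (X * Y) $$ (i, i + s) + X $$ (i,i) * U $$ (i, i + s) * Y $$ (i + s, i + s)"
proof -
  have XU_low: "(X * U) $$ (i,r) = X $$ (i,r)" if r: "r < n" "r < i + s" for r
  proof -
    have "(X * U) $$ (i,r) = (\<Sum>p<n. X $$ (i,p) * U $$ (p,r))"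
      using i r by (intro index_mult_mat_sum[OF X U]) auto
    also have "\<dots> = X $$ (i,r) * U $$ (r,r)"
      using i r
    proof (intro sum_lessThan_eq_single)
      fix p assume "p < n" "p \<noteq> r"
      thus "X $$ (i,p) * U $$ (p,r) = 0" using uX X sU i r unfolding unipotent_depth_def
        by (cases "p < i") (auto simp: upper_triangular_def)
    qed auto
    finally show ?thesis using sU r s unfolding unipotent_depth_def by auto
  qed
  have XU_diag: "(X * U) $$ (i, i + s) = X $$ (i,i) * U $$ (i, i + s) + X $$ (i, i + s)"
  proof -
    have "(X * U) $$ (i, i + s) = (\<Sum>p<n. X $$ (i,p) * U $$ (p, i + s))"
      using i by (intro index_mult_mat_sum[OF X U]) auto
    also have "\<dots> = X $$ (i,i) * U $$ (i, i + s) + X $$ (i, i + s) * U $$ (i + s, i + s)"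
      using i
    proof (intro sum_lessThan_eq_two)
      fix p assume "p < n" "p \<noteq> i" "p \<noteq> i + s"
      thus "X $$ (i,p) * U $$ (p, i + s) = 0" using uX X sU i unfolding unipotent_depth_def
        by (cases "p < i") (auto simp: upper_triangular_def)
    qed (use s in auto)
    finally show ?thesis using sU i s unfolding unipotent_depth_def by auto
  qed
  have "(X * U * Y) $$ (i, i + s) - (X * Y) $$ (i, i + s)
      = (\<Sum>r<n. ((X * U) $$ (i,r) - X $$ (i,r)) * Y $$ (r, i + s))"
    using i index_mult_mat_sum[OF mult_carrier_mat[OF X U] Y, of i "i + s"]
      index_mult_mat_sum[OF X Y, of i "i + s"]
    by (simp add: sum_subtractf[symmetric] left_diff_distrib)
  also have "\<dots> = ((X * U) $$ (i, i + s) - X $$ (i, i + s)) * Y $$ (i + s, i + s)"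
    using i
  proof (intro sum_lessThan_eq_single)
    fix r assume "r < n" "r \<noteq> i + s"
    thus "((X * U) $$ (i,r) - X $$ (i,r)) * Y $$ (r, i + s) = 0" using XU_low uY Y
      by (cases "r < i + s") (auto simp: upper_triangular_def)
  qed
  finally show ?thesis using XU_diag by (simp add: diff_eq_eq add.commute)
qed

lemma unipotent_depth_exists:
  assumes U: "U \<in> carrier_mat n n" and uU: "upper_triangular U"
    and diag: "\<And>p. p < n \<Longrightarrow> U $$ (p,p) = 1" and ne: "U \<noteq> 1\<^sub>m n"
  shows "\<exists>s i. s \<ge> 1 \<and> i + s < n \<and> unipotent_depth n s U \<and> U $$ (i, i + s) \<noteq> 0"
proof -
  define P where "P s \<longleftrightarrow> s \<ge> 1 \<and> (\<exists>i. i + s < n \<and> U $$ (i, i + s) \<noteq> 0)" for s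
  have "\<exists>p q. p < n \<and> q < n \<and> U $$ (p,q) \<noteq> 1\<^sub>m n $$ (p,q)"
  proof (rule ccontr)
    assume "\<not> ?thesis"
    hence "U = 1\<^sub>m n" using U by (intro eq_matI) auto
    thus False using ne by simp
  qed
  then obtain p q where pq: "p < n" "q < n" "U $$ (p,q) \<noteq> 1\<^sub>m n $$ (p,q)" by blast
  have "p < q"
  proof (rule ccontr)
    assume "\<not> p < q"
    then consider "q < p" | "q = p" by linarith
    thus False using pq uU U diag by cases (auto simp: upper_triangular_def)
  qed
  hence "P (q - p)" using pq unfolding P_def by (intro conjI exI[of _ p]) auto
  hence Ps: "P (LEAST s. P s)" by (rule LeastI)
  have "unipotent_depth n (LEAST s. P s) U"
    unfolding unipotent_depth_def
  proof (intro allI impI)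
    fix p' q' assume pq': "p' < n" "q' < n" "q' < p' + (LEAST s. P s)"
    show "U $$ (p',q') = (if p' = q' then 1 else 0)"
    proof (cases "p' < q'")
      case True
      then obtain d where d: "q' = p' + d" "0 < d" using less_imp_add_positive by blast
      hence "\<not> P d" using pq' not_less_Least[of d P] by simp
      thus ?thesis using d pq' unfolding P_def by auto
    qed (use uU U diag pq' in \<open>auto simp: upper_triangular_def\<close>)
  qed
  thus ?thesis using Ps unfolding P_def by blast
qed

lemma upper_triangular_conj_pow_diag:
  fixes X Y U :: "'a::idom mat"
  assumes X: "X \<in> carrier_mat n n" and Y: "Y \<in> carrier_mat n n" and U: "U \<in> carrier_mat n n"
    and uX: "upper_triangular X" and uY: "upper_triangular Y" and XY: "X * Y = 1\<^sub>m n"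
    and sU: "unipotent_depth n s U" and s: "s \<ge> 1" and i: "i + s < n"
    and conj: "X * U * Y = U ^\<^sub>m k" and u: "U $$ (i, i + s) \<noteq> 0"
  shows "X $$ (i,i) * Y $$ (i + s, i + s) = of_nat k"
proof -
  have "X $$ (i,i) * Y $$ (i + s, i + s) * U $$ (i, i + s) = (X * U * Y) $$ (i, i + s)"
    using upper_triangular_conj_entry[OF X Y U uX uY sU s i] XY i s by simp
  also have "\<dots> = of_nat k * U $$ (i, i + s)"
    using unipotent_depth_pow_entry[OF s U sU i, of k] conj by simp
  finally show ?thesis using u by simp
qed

section \<open>The ring Z[1/m] and congruences modulo N\<close>

lemma zinvI: "q = of_int a / of_nat m ^ k \<Longrightarrow> q \<in> zinv m"
  unfolding zinv_def by blast

lemma zinvE: "q \<in> zinv m \<Longrightarrow> (\<And>a k. q = of_int a / of_nat m ^ k \<Longrightarrow> P) \<Longrightarrow> P"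
  unfolding zinv_def by blast

lemma of_int_in_zinv: "of_int a \<in> zinv m"
  by (rule zinvI[of _ a _ 0]) simp

lemma of_nat_in_zinv: "of_nat a \<in> zinv m"
  using of_int_in_zinv[of "int a" m] by simp

lemma zero_in_zinv: "0 \<in> zinv m" and one_in_zinv: "1 \<in> zinv m"
  using of_int_in_zinv[of 0 m] of_int_in_zinv[of 1 m] by auto

lemma zinv_add:
  assumes m: "m > 0" and x: "x \<in> zinv m" and y: "y \<in> zinv m" shows "x + y \<in> zinv m"
proof -
  obtain a k where a: "x = of_int a / of_nat m ^ k" using x by (rule zinvE)
  obtain b l where b: "y = of_int b / of_nat m ^ l" using y by (rule zinvE)
  show ?thesis
    by (rule zinvI[of _ "a * int m ^ l + b * int m ^ k" _ "k + l"])
       (use m in \<open>simp add: a b field_simps power_add\<close>)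
qed

lemma zinv_mult:
  assumes x: "x \<in> zinv m" and y: "y \<in> zinv m" shows "x * y \<in> zinv m"
proof -
  obtain a k where a: "x = of_int a / of_nat m ^ k" using x by (rule zinvE)
  obtain b l where b: "y = of_int b / of_nat m ^ l" using y by (rule zinvE)
  show ?thesis
    by (rule zinvI[of _ "a * b" _ "k + l"]) (simp add: a b power_add)
qed

lemma zinv_uminus: "x \<in> zinv m \<Longrightarrow> - x \<in> zinv m"
  using zinv_mult[OF of_int_in_zinv[of "-1" m]] by simp

lemma zinv_sum: "m > 0 \<Longrightarrow> (\<And>p. p \<in> S \<Longrightarrow> f p \<in> zinv m) \<Longrightarrow> sum f S \<in> zinv m"
  by (induct S rule: infinite_finite_induct) (auto simp: zero_in_zinv zinv_add)

definition zinv_dvd :: "nat \<Rightarrow> nat \<Rightarrow> rat \<Rightarrow> bool" where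
  "zinv_dvd m N x \<longleftrightarrow> x / of_nat N \<in> zinv m"

lemma zinv_dvd_0: "zinv_dvd m N 0"
  by (simp add: zinv_dvd_def zero_in_zinv)

lemma zinv_dvd_add: "m > 0 \<Longrightarrow> zinv_dvd m N x \<Longrightarrow> zinv_dvd m N y \<Longrightarrow> zinv_dvd m N (x + y)"
  unfolding zinv_dvd_def using zinv_add[of m "x / of_nat N" "y / of_nat N"]
  by (simp add: add_divide_distrib)

lemma zinv_dvd_uminus: "zinv_dvd m N x \<Longrightarrow> zinv_dvd m N (- x)"
  unfolding zinv_dvd_def using zinv_uminus[of "x / of_nat N" m] by simp

lemma zinv_dvd_mult_left: "y \<in> zinv m \<Longrightarrow> zinv_dvd m N x \<Longrightarrow> zinv_dvd m N (y * x)"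
  unfolding zinv_dvd_def using zinv_mult[of y m "x / of_nat N"] by (simp add: times_divide_eq_right)

lemma zinv_dvd_mult_right: "y \<in> zinv m \<Longrightarrow> zinv_dvd m N x \<Longrightarrow> zinv_dvd m N (x * y)"
  using zinv_dvd_mult_left[of y m N x] by (simp add: mult.commute)

lemma zinv_dvd_sum: "m > 0 \<Longrightarrow> (\<And>p. p \<in> S \<Longrightarrow> zinv_dvd m N (f p)) \<Longrightarrow> zinv_dvd m N (sum f S)"
  by (induct S rule: infinite_finite_induct) (auto simp: zinv_dvd_0 zinv_dvd_add)

lemma zinv_dvd_trans:
  assumes N: "N > 0" and x: "zinv_dvd m N x" and d: "N' dvd N"
  shows "zinv_dvd m N' x"
proof -
  obtain c where N': "N = N' * c" using d by (elim dvdE)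
  hence "x / of_nat N' = of_nat c * (x / of_nat N)" using N by (simp add: field_simps)
  thus ?thesis using x zinv_mult[OF of_nat_in_zinv[of c m]] unfolding zinv_dvd_def by metis
qed

lemma zinv_dvd_mult_minus_one:
  assumes m: "m > 0" and x: "x \<in> zinv m" and "zinv_dvd m N (x - 1)" "zinv_dvd m N (y - 1)"
  shows "zinv_dvd m N (x * y - 1)"
proof -
  have "x * y - 1 = x * (y - 1) + (x - 1)" by (simp add: algebra_simps)
  thus ?thesis using assms zinv_dvd_add[OF m zinv_dvd_mult_left] by metis
qed

lemma rat_power_eq_self_imp_square_one:
  fixes x :: rat
  assumes x0: "x \<noteq> 0" and xm: "x ^ m = x" and m2: "m \<ge> 2"
  shows "x * x = 1"
proof -
  have "x ^ (m - 1) * x = x ^ m" by (rule power_minus_mult) (use m2 in simp)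
  hence "x ^ (m - 1) = 1" using xm x0 by simp
  hence "\<bar>x\<bar> ^ (m - 1) = 1 ^ (m - 1)" by (simp add: power_abs[symmetric])
  hence "\<bar>x\<bar> = 1" using m2 by (subst (asm) power_eq_iff_eq_base) auto
  thus ?thesis by (metis abs_mult_self_eq mult_1)
qed

lemma coprime_part_decomp:
  fixes x m :: nat
  assumes "x > 0"
  shows "\<exists>N g R. x = N * g \<and> coprime N m \<and> g dvd m ^ R"
  using assms
proof (induct x rule: less_induct)
  case (less x)
  show ?case
  proof (cases "coprime x m")
    case True thus ?thesis by (intro exI[of _ x] exI[of _ 1] exI[of _ 0]) auto
  next
    case False
    define d where "d = gcd x m"
    have "d \<noteq> 1" using False unfolding d_def by (simp add: coprime_iff_gcd_eq_1)
    obtain x' where x': "x = d * x'" unfolding d_def by (metis gcd_dvd1 dvdE)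
    hence "0 < x'" "x' < x" using less(2) \<open>d \<noteq> 1\<close> by auto
    then obtain N g R where IH: "x' = N * g" "coprime N m" "g dvd m ^ R"
      using less(1) by blast
    have "d * g dvd m * m ^ R" using IH(3) by (intro mult_dvd_mono) (simp_all add: d_def)
    thus ?thesis using IH x' by (intro exI[of _ N] exI[of _ "d * g"] exI[of _ "Suc R"]) auto
  qed
qed

lemma coprime_power_minus_one:
  fixes m k :: nat
  assumes "m > 1" "k > 0"
  shows "coprime (m ^ k - 1) m"
proof (rule coprimeI)
  fix c assume c1: "c dvd m ^ k - 1" and c2: "c dvd m"
  have "c dvd m ^ k" using c2 assms(2) by (meson dvd_power dvd_trans)
  hence "c dvd m ^ k - (m ^ k - 1)" using c1 by (rule dvd_diff_nat)
  moreover have "m ^ k - (m ^ k - 1) = 1" using assms by simp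
  ultimately show "is_unit c" by simp
qed

lemma power_minus_one_dvd:
  fixes y :: nat
  assumes "y \<ge> 1"
  shows "(y - 1) dvd (y ^ q - 1)"
proof (induct q)
  case (Suc q)
  have "y ^ Suc q - 1 = y * (y ^ q - 1) + (y - 1)"
    using assms by (simp add: algebra_simps diff_mult_distrib2)
  thus ?case using Suc by simp
qed simp

lemma power_minus_one_dvd_imp_dvd:
  fixes x :: nat
  assumes x: "x \<ge> 2" and D: "D > 0" and d: "(x ^ D - 1) dvd (x ^ E - 1)"
  shows "D dvd E"
proof -
  define q r where "q = E div D" and "r = E mod D"
  have E: "E = q * D + r" and r: "r < D" using D unfolding q_def r_def by auto
  have pos: "x ^ r \<ge> 1" "x ^ (q * D) \<ge> 1" using x by auto
  have "x ^ E - 1 = x ^ r * (x ^ (q * D) - 1) + (x ^ r - 1)"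
    using pos unfolding E by (simp add: power_add diff_mult_distrib2 mult.commute)
  moreover have "(x ^ D - 1) dvd (x ^ (q * D) - 1)"
    using power_minus_one_dvd[of "x ^ D" q] x by (simp add: power_mult mult.commute)
  ultimately have "(x ^ D - 1) dvd (x ^ r - 1)" using d
    by (metis dvd_add_right_iff dvd_mult)
  moreover have "x ^ r - 1 < x ^ D - 1"
    using r x pos by (simp add: diff_less_mono power_strict_increasing_iff)
  ultimately have "x ^ r = 1" using nat_dvd_not_less pos by fastforce
  hence "r = 0" using x by simp
  thus ?thesis using E by simp
qed

lemma zinv_dvd_imp_int_dvd:
  assumes m: "m > 0" and N: "N > 0" and c: "zinv_dvd m N (of_int c / of_nat m ^ t)"
  shows "\<exists>r. int N dvd c * int m ^ r"
proof -
  obtain b r where br: "of_int c / of_nat m ^ t / of_nat N = (of_int b / of_nat m ^ r :: rat)"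
    using c unfolding zinv_dvd_def by (auto elim: zinvE)
  hence "(of_int (c * int m ^ r) :: rat) = of_int (int N * (b * int m ^ t))"
    using m N by (simp add: field_simps)
  hence "c * int m ^ r = int N * (b * int m ^ t)" by (rule of_int_eq_iff[THEN iffD1])
  thus ?thesis by (metis dvd_triv_left)
qed

lemma zinv_dvd_power_int_minus_one:
  fixes m N :: nat and e :: int
  assumes m: "m > 1" and N: "N > 0" and cop: "coprime N m"
    and c: "zinv_dvd m N (of_nat m powi e - 1)"
  shows "int N dvd int m ^ nat \<bar>e\<bar> - 1"
proof -
  define E where "E = nat \<bar>e\<bar>"
  have cop': "coprime (int N) (int m ^ k)" for k using cop by (simp add: coprime_power_right_iff)
  show ?thesis
  proof (cases "e \<ge> 0")
    case True
    hence "of_nat m powi e - 1 = of_int (int m ^ E - 1) / (of_nat m :: rat) ^ 0"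
      unfolding E_def by (simp add: power_int_def)
    then obtain r where "int N dvd (int m ^ E - 1) * int m ^ r"
      using zinv_dvd_imp_int_dvd[of m N "int m ^ E - 1" 0] m N c by auto
    thus ?thesis using cop' unfolding E_def by (simp add: coprime_dvd_mult_left_iff)
  next
    case False
    hence "of_nat m powi e - 1 = of_int (1 - int m ^ E) / (of_nat m :: rat) ^ E"
      unfolding E_def using m by (simp add: power_int_def power_inverse field_simps)
    then obtain r where "int N dvd (1 - int m ^ E) * int m ^ r"
      using zinv_dvd_imp_int_dvd[of m N "1 - int m ^ E" E] m N c by auto
    hence "int N dvd - (int m ^ E - 1)" using cop' by (simp add: coprime_dvd_mult_left_iff)
    thus ?thesis unfolding E_def by (simp only: dvd_minus_iff)
  qed
qed

lemma dvd_cancel_prime_to_part: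
  fixes D N M :: nat and c j :: int
  assumes dec: "int D * c = int N * int M" and M: "M dvd m ^ R" and c: "c \<noteq> 0"
    and N: "int N dvd j * c * int m ^ r"
  shows "int D dvd j * int m ^ (r + R)"
proof -
  have "int N * int M dvd j * c * int m ^ r * int m ^ R"
    using N M by (intro mult_dvd_mono) (auto simp flip: of_nat_power)
  hence "int D * c dvd (j * int m ^ (r + R)) * c" unfolding dec by (simp add: power_add mult_ac)
  thus ?thesis using c by simp
qed

section \<open>Matrices over Z[1/m]\<close>

definition upper_zinv :: "nat \<Rightarrow> nat \<Rightarrow> rat mat \<Rightarrow> bool" where
  "upper_zinv m n X \<longleftrightarrow> X \<in> carrier_mat n n \<and> entries_in (zinv m) n X \<and> upper_triangular X"

lemma entries_in_zinv_mult:
  assumes m: "m > 0" and X: "X \<in> carrier_mat n n" and Y: "Y \<in> carrier_mat n n"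
    and "entries_in (zinv m) n X" "entries_in (zinv m) n Y"
  shows "entries_in (zinv m) n (X * Y)"
  unfolding entries_in_def
proof (intro allI impI)
  fix i j assume ij: "i < n" "j < n"
  show "(X * Y) $$ (i,j) \<in> zinv m"
    unfolding index_mult_mat_sum[OF X Y ij]
    by (rule zinv_sum[OF m]) (use assms ij in \<open>auto simp: entries_in_def intro!: zinv_mult\<close>)
qed

lemma upper_zinv_mult: "m > 0 \<Longrightarrow> upper_zinv m n X \<Longrightarrow> upper_zinv m n Y \<Longrightarrow> upper_zinv m n (X * Y)"
  unfolding upper_zinv_def
  by (intro conjI mult_carrier_mat entries_in_zinv_mult upper_triangular_mult) auto

lemma upper_zinv_one: "upper_zinv m n (1\<^sub>m n)"
  unfolding upper_zinv_def entries_in_def by (auto simp: zero_in_zinv one_in_zinv)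

lemma Tn_zinv_inverse:
  assumes X: "X \<in> Tn_zinv m n" and Y: "Y \<in> carrier_mat n n"
    and XY: "X * Y = 1\<^sub>m n"
  shows "upper_zinv m n X" "upper_zinv m n Y"
proof -
  obtain B where B: "B \<in> carrier_mat n n" "entries_in (zinv m) n B" "B * X = 1\<^sub>m n"
    and Xc: "X \<in> carrier_mat n n" and eX: "entries_in (zinv m) n X" and uX: "upper_triangular X"
    using X unfolding Tn_zinv_def GLn_zinv_def by blast
  have "B = B * (X * Y)" using XY B(1) by simp
  also have "\<dots> = B * X * Y" using B(1) Xc Y by (simp add: assoc_mult_mat)
  also have "\<dots> = Y" using B(3) Y by simp
  finally show "upper_zinv m n Y"
    using B upper_triangular_right_inverse[OF Xc Y uX XY] Y unfolding upper_zinv_def by auto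
  show "upper_zinv m n X" using Xc eX uX unfolding upper_zinv_def by auto
qed

definition mat_cong :: "nat \<Rightarrow> nat \<Rightarrow> nat \<Rightarrow> rat mat \<Rightarrow> rat mat \<Rightarrow> bool" where
  "mat_cong m n N X Y \<longleftrightarrow> (\<forall>i<n. \<forall>j<n. zinv_dvd m N (X $$ (i,j) - Y $$ (i,j)))"

lemma cong_subgroup_iff:
  "g \<in> cong_subgroup m n N G \<longleftrightarrow> g \<in> G \<and> mat_cong m n N g (1\<^sub>m n)"
  by (simp add: cong_subgroup_def mat_cong_def zinv_dvd_def)

lemma mat_cong_sym: "mat_cong m n N X Y \<Longrightarrow> mat_cong m n N Y X"
  unfolding mat_cong_def using zinv_dvd_uminus by (metis minus_diff_eq)

lemma mat_cong_trans: "m > 0 \<Longrightarrow> mat_cong m n N X Y \<Longrightarrow> mat_cong m n N Y Z \<Longrightarrow> mat_cong m n N X Z"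
  unfolding mat_cong_def using zinv_dvd_add by (metis diff_add_cancel add_diff_eq)

lemma mat_cong_mult_left:
  assumes m: "m > 0" and W: "W \<in> carrier_mat n n" and X: "X \<in> carrier_mat n n"
    and Y: "Y \<in> carrier_mat n n" and eW: "entries_in (zinv m) n W" and c: "mat_cong m n N X Y"
  shows "mat_cong m n N (W * X) (W * Y)"
  unfolding mat_cong_def
proof (intro allI impI)
  fix i j assume ij: "i < n" "j < n"
  have "(W * X) $$ (i,j) - (W * Y) $$ (i,j) = (\<Sum>p<n. W $$ (i,p) * (X $$ (p,j) - Y $$ (p,j)))"
    unfolding index_mult_mat_sum[OF W X ij] index_mult_mat_sum[OF W Y ij]
    by (simp add: sum_subtractf[symmetric] right_diff_distrib)
  also have "zinv_dvd m N \<dots>"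
    by (rule zinv_dvd_sum[OF m])
       (use eW c ij in \<open>auto simp: entries_in_def mat_cong_def intro!: zinv_dvd_mult_left\<close>)
  finally show "zinv_dvd m N ((W * X) $$ (i,j) - (W * Y) $$ (i,j))" .
qed

lemma mat_cong_mult_right:
  assumes m: "m > 0" and W: "W \<in> carrier_mat n n" and X: "X \<in> carrier_mat n n"
    and Y: "Y \<in> carrier_mat n n" and eW: "entries_in (zinv m) n W" and c: "mat_cong m n N X Y"
  shows "mat_cong m n N (X * W) (Y * W)"
  unfolding mat_cong_def
proof (intro allI impI)
  fix i j assume ij: "i < n" "j < n"
  have "(X * W) $$ (i,j) - (Y * W) $$ (i,j) = (\<Sum>p<n. (X $$ (i,p) - Y $$ (i,p)) * W $$ (p,j))"
    unfolding index_mult_mat_sum[OF X W ij] index_mult_mat_sum[OF Y W ij]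
    by (simp add: sum_subtractf[symmetric] left_diff_distrib)
  also have "zinv_dvd m N \<dots>"
    by (rule zinv_dvd_sum[OF m])
       (use eW c ij in \<open>auto simp: entries_in_def mat_cong_def intro!: zinv_dvd_mult_right\<close>)
  finally show "zinv_dvd m N ((X * W) $$ (i,j) - (Y * W) $$ (i,j))" .
qed

section \<open>An affine model of BS(1,m)\<close>

text \<open>a acts on the rationals by x + 1 and t by m x; an affine map is recorded as
  (slope, intercept).\<close>

definition aff_comp :: "rat \<times> rat \<Rightarrow> rat \<times> rat \<Rightarrow> rat \<times> rat" where
  "aff_comp f g = (fst f * fst g, fst f * snd g + snd f)"

definition aff_letter :: "nat \<Rightarrow> letter \<Rightarrow> rat \<times> rat" where
  "aff_letter m l = (case l of (False,False) \<Rightarrow> (1,1) | (False,True) \<Rightarrow> (1,-1)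
      | (True,False) \<Rightarrow> (of_nat m, 0) | (True,True) \<Rightarrow> (1 / of_nat m, 0))"

definition aff_eval :: "nat \<Rightarrow> letter list \<Rightarrow> rat \<times> rat" where
  "aff_eval m w = foldr (\<lambda>l f. aff_comp (aff_letter m l) f) w (1,0)"

lemma aff_eval_append: "aff_eval m (u @ v) = aff_comp (aff_eval m u) (aff_eval m v)"
  by (induct u) (auto simp: aff_eval_def aff_comp_def algebra_simps)

lemma aff_eval_replicate_a: "aff_eval m (replicate k (False,False)) = (1, of_nat k)"
  by (induct k) (auto simp: aff_eval_def aff_comp_def aff_letter_def)

lemma bs_eq_aff_eval:
  assumes "m > 0" "bs_eq m u v" shows "aff_eval m u = aff_eval m v"
  using assms(2)
proof induct
  case (cancel u g e v)
  have "aff_eval m [(g,e),(g,\<not>e)] = (1,0)"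
    using assms(1) by (cases g; cases e) (auto simp: aff_eval_def aff_comp_def aff_letter_def)
  thus ?case by (simp only: aff_eval_append) (simp add: aff_comp_def)
next
  case (relator u v)
  have "aff_eval m [(True,False),(False,False),(True,True)] = (1, of_nat m)"
    using assms(1) by (auto simp: aff_eval_def aff_comp_def aff_letter_def)
  thus ?case by (simp only: aff_eval_append aff_eval_replicate_a)
qed auto

lemma bs_eq_a_square_nontrivial: "m > 0 \<Longrightarrow> \<not> bs_eq m [(False,False),(False,False)] []"
  using bs_eq_aff_eval[of m "[(False,False),(False,False)]" "[]"]
  by (auto simp: aff_eval_def aff_comp_def aff_letter_def)

definition letter_inv :: "letter \<Rightarrow> letter" where "letter_inv l = (fst l, \<not> snd l)"

locale bs_rep =
  fixes m n :: nat and A Ai T Ti :: "rat mat"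
  assumes m2: "m \<ge> 2"
    and A: "A \<in> Tn_zinv m n" and T: "T \<in> Tn_zinv m n"
    and Ai: "Ai \<in> carrier_mat n n" and AAi: "A * Ai = 1\<^sub>m n" and AiA: "Ai * A = 1\<^sub>m n"
    and Ti: "Ti \<in> carrier_mat n n" and TTi: "T * Ti = 1\<^sub>m n" and TiT: "Ti * T = 1\<^sub>m n"
    and hom: "T * A * Ti = A ^\<^sub>m m"
    and inj: "\<forall>w. word_eval n A Ai T Ti w = 1\<^sub>m n \<longrightarrow> bs_eq m w []"
begin

abbreviation ev where "ev \<equiv> word_eval n A Ai T Ti"
abbreviation \<Gamma> where "\<Gamma> \<equiv> range ev"
abbreviation Gr where "Gr \<equiv> mat_grp n \<Gamma>"
abbreviation gmult :: "rat mat \<Rightarrow> rat mat \<Rightarrow> rat mat" (infixl "\<odot>" 70)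
  where "x \<odot> y \<equiv> x \<otimes>\<^bsub>Gr\<^esub> y"
abbreviation ginv :: "rat mat \<Rightarrow> rat mat" where "ginv x \<equiv> inv\<^bsub>Gr\<^esub> x"

lemma m_pos: "m > 0" using m2 by auto

lemma upper_A: "upper_zinv m n A" and upper_Ai: "upper_zinv m n Ai"
  and upper_T: "upper_zinv m n T" and upper_Ti: "upper_zinv m n Ti"
  using Tn_zinv_inverse[OF A Ai AAi] Tn_zinv_inverse[OF T Ti TTi] by auto

lemma upper_letter_eval: "upper_zinv m n (letter_eval A Ai T Ti l)"
  using upper_A upper_Ai upper_T upper_Ti
  by (cases l, rename_tac a b, case_tac a; case_tac b) (auto simp: letter_eval_def)

lemma ev_Nil: "ev [] = 1\<^sub>m n" by (simp add: word_eval_def)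

lemma ev_Cons: "ev (l # w) = letter_eval A Ai T Ti l * ev w" by (simp add: word_eval_def)

lemma upper_ev: "upper_zinv m n (ev w)"
  by (induct w)
     (simp_all add: ev_Nil ev_Cons upper_zinv_one upper_zinv_mult[OF m_pos upper_letter_eval])

lemma carrier_ev: "ev w \<in> carrier_mat n n"
  using upper_ev by (simp add: upper_zinv_def)

lemma ev_append: "ev (u @ v) = ev u * ev v"
proof (induct u)
  case Nil thus ?case using carrier_ev[of v] by (simp add: ev_Nil)
next
  case (Cons l u)
  have "letter_eval A Ai T Ti l \<in> carrier_mat n n"
    using upper_letter_eval[of l] by (simp add: upper_zinv_def)
  thus ?case using Cons carrier_ev[of u] carrier_ev[of v] by (simp add: ev_Cons assoc_mult_mat)
qed

lemma ev_single: "ev [l] = letter_eval A Ai T Ti l"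
  using upper_letter_eval[of l] right_mult_one_mat[of "letter_eval A Ai T Ti l" n n]
  by (simp add: ev_Cons ev_Nil upper_zinv_def)

lemma ev_letter_inv: "ev [letter_inv l] * ev [l] = 1\<^sub>m n"
  using AAi AiA TTi TiT unfolding ev_single
  by (cases l, rename_tac a b, case_tac a; case_tac b) (auto simp: letter_eval_def letter_inv_def)

lemma ev_word_inv: "ev (rev (map letter_inv w)) * ev w = 1\<^sub>m n"
proof (induct w)
  case Nil thus ?case by (simp add: ev_Nil)
next
  case (Cons l w)
  let ?R = "ev (rev (map letter_inv w))" and ?li = "ev [letter_inv l]"
  have "ev (rev (map letter_inv (l # w))) * ev (l # w) = (?R * ?li) * (ev [l] * ev w)"
    using ev_append[of "[l]" w] by (simp add: ev_append)
  also have "\<dots> = ?R * (?li * (ev [l] * ev w))"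
    by (rule assoc_mult_mat) (auto intro: carrier_ev mult_carrier_mat)
  also have "?li * (ev [l] * ev w) = (?li * ev [l]) * ev w"
    by (rule assoc_mult_mat[symmetric]) (auto intro: carrier_ev)
  also have "?R * ((?li * ev [l]) * ev w) = 1\<^sub>m n"
    using Cons carrier_ev[of w] by (simp add: ev_letter_inv)
  finally show ?case .
qed

lemma Gr_simps: "carrier Gr = \<Gamma>" "mult Gr = (*)" "one Gr = 1\<^sub>m n"
  by (simp_all add: mat_grp_def)

lemma group_Gr: "group Gr"
proof (rule groupI, unfold Gr_simps)
  fix x y assume "x \<in> \<Gamma>" "y \<in> \<Gamma>"
  then obtain u v where "x = ev u" "y = ev v" by auto
  thus "x * y \<in> \<Gamma>" by (simp add: ev_append[symmetric])
next
  show "1\<^sub>m n \<in> \<Gamma>" using ev_Nil by (metis rangeI)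
next
  fix x y z assume "x \<in> \<Gamma>" "y \<in> \<Gamma>" "z \<in> \<Gamma>"
  thus "x * y * z = x * (y * z)" using carrier_ev by (auto intro: assoc_mult_mat)
next
  fix x assume "x \<in> \<Gamma>"
  thus "1\<^sub>m n * x = x" using left_mult_one_mat[OF carrier_ev] by auto
next
  fix x assume "x \<in> \<Gamma>"
  then obtain w where "x = ev w" by auto
  thus "\<exists>y\<in>\<Gamma>. y * x = 1\<^sub>m n" using ev_word_inv[of w] by blast
qed

sublocale grp: group Gr by (rule group_Gr)

lemma A_in: "A \<in> carrier Gr" and T_in: "T \<in> carrier Gr" and Ai_in: "Ai \<in> carrier Gr"
  and Ti_in: "Ti \<in> carrier Gr"
  using ev_single[of "(False,False)"] ev_single[of "(True,False)"]
    ev_single[of "(False,True)"] ev_single[of "(True,True)"]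
  by (simp_all add: letter_eval_def Gr_simps) (metis rangeI)+

lemma inv_A: "ginv A = Ai" and inv_T: "ginv T = Ti"
  using grp.inv_equality[of Ai A] grp.inv_equality[of Ti T] A_in T_in Ai_in Ti_in AiA TiT
  by (auto simp: Gr_simps)

lemma mult_Gr: "x \<odot> y = x * y" and one_Gr: "\<one>\<^bsub>Gr\<^esub> = 1\<^sub>m n"
  by (simp_all add: Gr_simps)

lemma upper_Gr: "x \<in> carrier Gr \<Longrightarrow> upper_zinv m n x"
  using upper_ev by (auto simp: Gr_simps)

lemma carrier_Gr: "x \<in> carrier Gr \<Longrightarrow> x \<in> carrier_mat n n"
  using upper_Gr by (simp add: upper_zinv_def)

lemma nat_pow_Gr: "x \<in> carrier Gr \<Longrightarrow> x [^]\<^bsub>Gr\<^esub> (k::nat) = x ^\<^sub>m k"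
proof (induct k)
  case 0
  thus ?case using carrier_Gr[OF 0] by (auto simp: Gr_simps)
qed (simp add: Gr_simps)

subsection \<open>Normal form\<close>

abbreviation tpow :: "int \<Rightarrow> rat mat" where "tpow a \<equiv> T [^]\<^bsub>Gr\<^esub> a"
abbreviation apow :: "int \<Rightarrow> rat mat" where "apow a \<equiv> A [^]\<^bsub>Gr\<^esub> a"

lemma tpow_in: "tpow a \<in> carrier Gr" and apow_in: "apow a \<in> carrier Gr"
  using T_in A_in by auto

lemma tpow_mult: "tpow a \<odot> tpow b = tpow (a + b)"
  by (simp add: grp.int_pow_mult T_in)

lemma tpow_mult_assoc: "x \<in> carrier Gr \<Longrightarrow> tpow a \<odot> (tpow b \<odot> x) = tpow (a + b) \<odot> x"
  by (subst grp.m_assoc[symmetric]) (auto simp: tpow_mult tpow_in)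

lemma apow_mult: "apow a \<odot> apow b = apow (a + b)"
  by (simp add: grp.int_pow_mult A_in)

lemma apow_mult_assoc: "x \<in> carrier Gr \<Longrightarrow> apow a \<odot> (apow b \<odot> x) = apow (a + b) \<odot> x"
  by (subst grp.m_assoc[symmetric]) (auto simp: apow_mult apow_in)

lemma T_conj_A: "T \<odot> A \<odot> ginv T = A [^]\<^bsub>Gr\<^esub> m"
  using hom by (simp add: inv_T nat_pow_Gr[OF A_in] Gr_simps)

lemma T_conj_apow: "T \<odot> apow j \<odot> ginv T = apow (int m * j)"
  by (simp add: grp.conj_int_pow[symmetric] T_in A_in T_conj_A grp.int_pow_pow
      flip: int_pow_int)

lemma T_nat_pow_conj_apow:
  "T [^]\<^bsub>Gr\<^esub> (k::nat) \<odot> apow j \<odot> ginv (T [^]\<^bsub>Gr\<^esub> k) = apow (j * int m ^ k)"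
proof (induct k arbitrary: j)
  case 0 thus ?case by (simp add: A_in)
next
  case (Suc k)
  have "T [^]\<^bsub>Gr\<^esub> Suc k \<odot> apow j \<odot> ginv (T [^]\<^bsub>Gr\<^esub> Suc k)
      = T [^]\<^bsub>Gr\<^esub> k \<odot> (T \<odot> apow j \<odot> ginv T) \<odot> ginv (T [^]\<^bsub>Gr\<^esub> k)"
    by (simp add: grp.inv_mult_group grp.m_assoc T_in A_in)
  also have "\<dots> = apow (int m * j * int m ^ k)" unfolding T_conj_apow Suc ..
  finally show ?case by (simp add: mult_ac)
qed

lemma tpow_conj_apow:
  assumes k: "0 \<le> k" and x: "x \<in> carrier Gr"
  shows "tpow k \<odot> (apow j \<odot> (tpow (- k) \<odot> x)) = apow (j * int m ^ nat k) \<odot> x"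
proof -
  have "tpow k \<odot> (apow j \<odot> (tpow (- k) \<odot> x))
      = (tpow k \<odot> apow j \<odot> tpow (- k)) \<odot> x"
    using x by (simp add: grp.m_assoc tpow_in apow_in)
  also have "tpow k \<odot> apow j \<odot> tpow (- k) = apow (j * int m ^ nat k)"
    using T_nat_pow_conj_apow[of "nat k" j] k by (simp add: grp.int_pow_neg T_in flip: int_pow_int)
  finally show ?thesis .
qed

definition nf :: "nat \<Rightarrow> int \<Rightarrow> int \<Rightarrow> rat mat" where
  "nf k j b = tpow (- int k) \<odot> (apow j \<odot> tpow b)"

lemma apow_nf: "c = 1 \<or> c = -1 \<Longrightarrow> apow c \<odot> nf k j b = nf k (c * int m ^ k + j) b"
proof -
  have "apow c \<odot> nf k j b
      = tpow (- int k) \<odot> (tpow (int k) \<odot> (apow c \<odot> (tpow (- int k) \<odot> (apow j \<odot> tpow b))))"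
    unfolding nf_def by (simp add: tpow_mult_assoc tpow_in apow_in)
  also have "\<dots> = nf k (c * int m ^ k + j) b"
    using tpow_conj_apow[of "int k" "apow j \<odot> tpow b" c]
    by (simp add: nf_def apow_mult_assoc apow_in tpow_in)
  finally show ?thesis .
qed

lemma T_nf: "tpow 1 \<odot> nf k j b = (if k = 0 then nf 0 (j * int m) (b + 1) else nf (k - 1) j b)"
proof (cases k)
  case 0
  have "tpow 1 \<odot> nf k j b = tpow 1 \<odot> (apow j \<odot> (tpow (- 1) \<odot> tpow (b + 1)))"
    unfolding nf_def 0 by (simp add: tpow_mult apow_in tpow_in)
  also have "\<dots> = nf 0 (j * int m) (b + 1)"
    using tpow_conj_apow[of 1 "tpow (b+1)" j] by (simp add: nf_def tpow_in apow_in)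
  finally show ?thesis using 0 by simp
next
  case (Suc k')
  hence "1 + - int k = - int k'" by simp
  thus ?thesis using Suc by (simp add: nf_def tpow_mult_assoc apow_in tpow_in)
qed

lemma Ti_nf: "tpow (- 1) \<odot> nf k j b = nf (Suc k) j b"
  unfolding nf_def by (simp add: tpow_mult_assoc apow_in tpow_in add.commute)

lemma letter_eval_mult_nf: "\<exists>k' j' b'. letter_eval A Ai T Ti l \<odot> nf k j b = nf k' j' b'"
proof -
  obtain g e where l: "l = (g, e)" by (cases l)
  show ?thesis
  proof (cases g; cases e)
    assume "g" "e"
    hence "letter_eval A Ai T Ti l = tpow (- 1)"
      using l by (simp add: letter_eval_def grp.int_pow_neg T_in inv_T)
    thus ?thesis using Ti_nf[of k j b] by auto
  next
    assume "g" "\<not> e"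
    hence "letter_eval A Ai T Ti l = tpow 1" using l by (simp add: letter_eval_def T_in)
    thus ?thesis using T_nf[of k j b] by (cases "k = 0") auto
  next
    assume "\<not> g" "e"
    hence "letter_eval A Ai T Ti l = apow (- 1)"
      using l by (simp add: letter_eval_def grp.int_pow_neg A_in inv_A)
    thus ?thesis using apow_nf[of "-1" k j b] by auto
  next
    assume "\<not> g" "\<not> e"
    hence "letter_eval A Ai T Ti l = apow 1" using l by (simp add: letter_eval_def A_in)
    thus ?thesis using apow_nf[of 1 k j b] by auto
  qed
qed

lemma normal_form: "g \<in> carrier Gr \<Longrightarrow> \<exists>k j b. g = nf k j b"
proof -
  assume "g \<in> carrier Gr"
  then obtain w where g: "g = ev w" by (auto simp: Gr_simps)
  have "\<exists>k j b. ev w = nf k j b"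
  proof (induct w)
    case Nil
    have "nf 0 0 0 = 1\<^sub>m n" unfolding nf_def by (simp add: Gr_simps)
    thus ?case by (metis ev_Nil)
  next
    case (Cons l w)
    then obtain k j b where "ev w = nf k j b" by blast
    hence "ev (l # w) = letter_eval A Ai T Ti l \<odot> nf k j b" by (simp add: ev_Cons mult_Gr)
    moreover obtain k' j' b' where "letter_eval A Ai T Ti l \<odot> nf k j b = nf k' j' b'"
      using letter_eval_mult_nf by blast
    ultimately show ?case by auto
  qed
  thus ?thesis using g by simp
qed

lemma tpow_conj_nf: "tpow (int k) \<odot> nf k j b \<odot> tpow (- int k) = apow j \<odot> tpow (b - int k)"
  unfolding nf_def by (simp add: grp.m_assoc tpow_mult tpow_mult_assoc apow_in tpow_in)

lemma nf_split: "nf k j b = (tpow (- int k) \<odot> (apow j \<odot> tpow (int k))) \<odot> tpow (b - int k)"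
  unfolding nf_def by (simp add: grp.m_assoc tpow_mult apow_in tpow_in)

lemma commutator_T:
  "(apow j \<odot> tpow e) \<odot> T \<odot> ginv (apow j \<odot> tpow e) \<odot> ginv T
    = apow (j - j * int m)"
proof -
  have "(apow j \<odot> tpow e) \<odot> T \<odot> ginv (apow j \<odot> tpow e) \<odot> ginv T
     = apow j \<odot> (tpow e \<odot> (tpow 1 \<odot> (tpow (- e) \<odot> (apow (- j) \<odot> tpow (- 1)))))"
    by (simp add: grp.inv_mult_group grp.m_assoc grp.int_pow_neg apow_in tpow_in A_in T_in)
  also have "\<dots> = apow j \<odot> (tpow 1 \<odot> (apow (- j) \<odot> (tpow (- 1) \<odot> \<one>\<^bsub>Gr\<^esub>)))"
    by (simp add: tpow_mult_assoc apow_in tpow_in)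
  also have "\<dots> = apow (j - j * int m)"
    using tpow_conj_apow[of 1 "\<one>\<^bsub>Gr\<^esub>" "- j"] by (simp add: apow_mult apow_in)
  finally show ?thesis .
qed

lemma tpow_in_subgroup:
  assumes H: "subgroup H Gr" and D: "\<forall>x\<in>carrier Gr. x [^]\<^bsub>Gr\<^esub> (D::nat) \<in> H"
    and d: "int D dvd e"
  shows "tpow e \<in> H"
proof -
  obtain q where e: "e = int D * q" using d by (elim dvdE)
  have "tpow e = (T [^]\<^bsub>Gr\<^esub> D) [^]\<^bsub>Gr\<^esub> q"
    unfolding e by (simp add: grp.int_pow_pow T_in flip: int_pow_int)
  also have "\<dots> \<in> H" using D T_in grp.subgroup_int_pow_closed[OF H] by blast
  finally show ?thesis .
qed

lemma conj_apow_in_subgroup: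
  assumes H: "subgroup H Gr" and D: "\<forall>x\<in>carrier Gr. x [^]\<^bsub>Gr\<^esub> (D::nat) \<in> H"
    and d: "int D dvd j * int m ^ R"
  shows "tpow (- int k) \<odot> (apow j \<odot> tpow (int k)) \<in> H"
proof -
  obtain q where q: "j * int m ^ R = int D * q" using d by (elim dvdE)
  have aj: "apow j = tpow (- int R) \<odot> (apow (int D * q) \<odot> tpow (int R))"
  proof -
    have "apow j = tpow (- int R) \<odot> (tpow (int R) \<odot> (apow j \<odot> (tpow (- int R) \<odot> tpow (int R))))"
      by (simp add: tpow_mult tpow_mult_assoc apow_in tpow_in)
    thus ?thesis using tpow_conj_apow[of "int R" "tpow (int R)" j] q by (simp add: tpow_in)
  qed
  define g where "g = tpow (- int (k + R))"
  have gi: "g = ginv (tpow (int (k + R)))" unfolding g_def by (rule grp.int_pow_neg[OF T_in])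
  have g: "g \<in> carrier Gr" "ginv g = tpow (int (k + R))"
    by (simp add: g_def tpow_in) (simp only: gi grp.inv_inv[OF tpow_in])
  have "tpow (- int k) \<odot> (apow j \<odot> tpow (int k))
      = g \<odot> apow (int D * q) \<odot> ginv g"
    unfolding aj g(2) unfolding g_def
    by (simp add: grp.m_assoc tpow_mult tpow_mult_assoc apow_in tpow_in add.commute)
  also have "\<dots> = ((g \<odot> A \<odot> ginv g) [^]\<^bsub>Gr\<^esub> D) [^]\<^bsub>Gr\<^esub> q"
    using g(1) A_in by (simp add: grp.conj_int_pow grp.int_pow_pow flip: int_pow_int)
  also have "\<dots> \<in> H" using D g(1) A_in grp.subgroup_int_pow_closed[OF H] by blast
  finally show ?thesis .
qed

abbreviation cong_one :: "nat \<Rightarrow> rat mat \<Rightarrow> bool" where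
  "cong_one N x \<equiv> mat_cong m n N x (1\<^sub>m n)"

lemma entries_Gr: "x \<in> carrier Gr \<Longrightarrow> entries_in (zinv m) n x"
  and upper_triangular_Gr: "x \<in> carrier Gr \<Longrightarrow> upper_triangular x"
  using upper_Gr by (simp_all add: upper_zinv_def)

lemma cong_one_mult:
  assumes x: "x \<in> carrier Gr" and y: "y \<in> carrier Gr" and "cong_one N x" "cong_one N y"
  shows "cong_one N (x \<odot> y)"
proof -
  have "mat_cong m n N (x * y) (1\<^sub>m n * y)"
    using assms by (intro mat_cong_mult_right[OF m_pos carrier_Gr[OF y] carrier_Gr[OF x]
        one_carrier_mat entries_Gr[OF y]])
  hence "mat_cong m n N (x * y) y" using carrier_Gr[OF y] by simp
  thus ?thesis using mat_cong_trans[OF m_pos _ assms(4)] by (simp add: mult_Gr)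
qed

lemma cong_one_inv:
  assumes x: "x \<in> carrier Gr" and c: "cong_one N x" shows "cong_one N (ginv x)"
proof -
  have ix: "ginv x \<in> carrier Gr" "x * ginv x = 1\<^sub>m n"
    using x grp.r_inv[OF x] by (simp_all add: mult_Gr one_Gr)
  have "mat_cong m n N (1\<^sub>m n * ginv x) (x * ginv x)"
    by (rule mat_cong_mult_right[OF m_pos carrier_Gr[OF ix(1)] one_carrier_mat
        carrier_Gr[OF x] entries_Gr[OF ix(1)] mat_cong_sym[OF c]])
  thus ?thesis using carrier_Gr[OF ix(1)] ix(2) by simp
qed

lemma cong_one_conj:
  assumes x: "x \<in> carrier Gr" and y: "y \<in> carrier Gr" and c: "cong_one N x"
  shows "cong_one N (y \<odot> x \<odot> ginv y)"
proof -
  have iy: "ginv y \<in> carrier Gr" "y * ginv y = 1\<^sub>m n"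
    using y grp.r_inv[OF y] by (simp_all add: mult_Gr one_Gr)
  have "mat_cong m n N (y * x) (y * 1\<^sub>m n)"
    using c by (rule mat_cong_mult_left[OF m_pos carrier_Gr[OF y] carrier_Gr[OF x] one_carrier_mat
        entries_Gr[OF y]])
  hence "mat_cong m n N (y * x) y" using carrier_Gr[OF y] by simp
  moreover have "y * x \<in> carrier Gr" using grp.m_closed[OF y x] by (simp add: mult_Gr)
  ultimately have "mat_cong m n N (y * x * ginv y) (y * ginv y)"
    by (intro mat_cong_mult_right[OF m_pos carrier_Gr[OF iy(1)] carrier_Gr carrier_Gr[OF y]
        entries_Gr[OF iy(1)]])
  thus ?thesis using iy(2) by (simp add: mult_Gr)
qed

lemma cong_one_entry:
  "cong_one N x \<Longrightarrow> p < n \<Longrightarrow> q < n \<Longrightarrow> zinv_dvd m N (x $$ (p,q) - (if p = q then 1 else 0))"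
  unfolding mat_cong_def by simp

lemma diag_mult:
  "x \<in> carrier Gr \<Longrightarrow> y \<in> carrier Gr \<Longrightarrow> i < n \<Longrightarrow>
    (x \<odot> y) $$ (i,i) = x $$ (i,i) * y $$ (i,i)"
  unfolding mult_Gr
  by (rule upper_triangular_mult_diag[OF carrier_Gr carrier_Gr upper_triangular_Gr upper_triangular_Gr])

lemma diag_inv:
  assumes x: "x \<in> carrier Gr" and i: "i < n"
  shows "(ginv x) $$ (i,i) = inverse (x $$ (i,i))"
proof -
  have "x $$ (i,i) * (ginv x) $$ (i,i) = 1"
    using diag_mult[OF x grp.inv_closed[OF x] i] grp.r_inv[OF x] i by (simp add: one_Gr)
  thus ?thesis by (rule inverse_unique[symmetric])
qed

lemma diag_nonzero: "x \<in> carrier Gr \<Longrightarrow> i < n \<Longrightarrow> x $$ (i,i) \<noteq> 0"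
  using diag_mult[OF _ grp.inv_closed] grp.r_inv by (fastforce simp: one_Gr)

lemma diag_nat_pow:
  assumes x: "x \<in> carrier Gr" and i: "i < n"
  shows "(x [^]\<^bsub>Gr\<^esub> (k::nat)) $$ (i,i) = x $$ (i,i) ^ k"
  by (induct k) (use x i diag_mult in \<open>simp_all add: one_Gr\<close>)

lemma diag_int_pow:
  assumes x: "x \<in> carrier Gr" and i: "i < n"
  shows "(x [^]\<^bsub>Gr\<^esub> (j::int)) $$ (i,i) = x $$ (i,i) powi j"
proof (cases "j < 0")
  case True
  then obtain k where k: "j = - int k" by (metis minus_minus nonneg_int_cases neg_0_less_iff_less less_imp_le)
  have "(x [^]\<^bsub>Gr\<^esub> j) $$ (i,i) = inverse (x $$ (i,i) ^ k)"
    unfolding k grp.int_pow_neg_int[OF x] using diag_inv[OF _ i] diag_nat_pow[OF x i] x by simp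
  thus ?thesis unfolding k by (simp only: power_int_minus power_int_of_nat)
next
  case False
  then obtain k where k: "j = int k" by (metis nonneg_int_cases not_less)
  show ?thesis unfolding k by (simp only: int_pow_int power_int_of_nat diag_nat_pow[OF x i])
qed

lemma A_square_in: "A * A \<in> carrier Gr"
  using grp.m_closed[OF A_in A_in] by (simp add: mult_Gr)

lemma diag_A_square: assumes i: "i < n" shows "A $$ (i,i) * A $$ (i,i) = 1"
proof -
  have "A $$ (i,i) ^ m = (T \<odot> A \<odot> ginv T) $$ (i,i)"
    unfolding T_conj_A diag_nat_pow[OF A_in i] ..
  also have "\<dots> = A $$ (i,i) * (T $$ (i,i) * (ginv T) $$ (i,i))"
    using diag_mult i T_in A_in by (simp add: mult_ac)
  also have "T $$ (i,i) * (ginv T) $$ (i,i) = 1"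
    using diag_inv[OF T_in i] diag_mult[OF T_in grp.inv_closed[OF T_in] i] grp.r_inv[OF T_in] i
    by (simp add: one_Gr)
  finally have "A $$ (i,i) ^ m = A $$ (i,i)" by simp
  moreover have "A $$ (i,i) \<noteq> 0" by (rule diag_nonzero[OF A_in i])
  ultimately show ?thesis using rat_power_eq_self_imp_square_one m2 by blast
qed

text \<open>Injectivity of the representation enters only here: a^2 is nontrivial in BS(1,m).\<close>

lemma A_square_ne_one: "A * A \<noteq> 1\<^sub>m n"
proof
  assume AA: "A * A = 1\<^sub>m n"
  have "ev [(False,False),(False,False)] = A * (A * 1\<^sub>m n)"
    by (simp add: ev_Cons ev_Nil letter_eval_def)
  hence "ev [(False,False),(False,False)] = 1\<^sub>m n"
    using AA carrier_Gr[OF A_in] by simp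
  thus False using inj bs_eq_a_square_nontrivial[OF m_pos] by blast
qed

lemma A_square_depth:
  "\<exists>s i. s \<ge> 1 \<and> i + s < n \<and> unipotent_depth n s (A * A) \<and> (A * A) $$ (i, i + s) \<noteq> 0"
proof (rule unipotent_depth_exists[OF _ _ _ A_square_ne_one])
  show "A * A \<in> carrier_mat n n" "upper_triangular (A * A)"
    using carrier_Gr[OF A_square_in] upper_triangular_Gr[OF A_square_in] by auto
  show "(A * A) $$ (p,p) = 1" if "p < n" for p
    using diag_mult[OF A_in A_in that] diag_A_square[OF that] by (simp add: mult_Gr)
qed

lemma T_conj_A_square: "T * (A * A) * Ti = (A * A) ^\<^sub>m m"
proof -
  have "A [^]\<^bsub>Gr\<^esub> (2::nat) = A \<odot> A" by (simp add: numeral_2_eq_2 A_in)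
  hence A2: "A [^]\<^bsub>Gr\<^esub> (2::nat) = A * A" by (simp add: mult_Gr)
  have "T \<odot> (A [^]\<^bsub>Gr\<^esub> (2::nat)) \<odot> ginv T = (A [^]\<^bsub>Gr\<^esub> (2::nat)) [^]\<^bsub>Gr\<^esub> m"
    using T_conj_A by (simp add: grp.conj_nat_pow[symmetric] T_in A_in grp.nat_pow_pow mult.commute)
  thus ?thesis unfolding A2 nat_pow_Gr[OF A_square_in] by (simp add: mult_Gr inv_T)
qed

lemma T_diag_ratio:
  assumes s: "s \<ge> 1" and i: "i + s < n" and sU: "unipotent_depth n s (A * A)"
    and u: "(A * A) $$ (i, i + s) \<noteq> 0"
  shows "T $$ (i,i) = of_nat m * T $$ (i + s, i + s)"
proof -
  have "T $$ (i,i) * inverse (T $$ (i + s, i + s)) = of_nat m"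
    using upper_triangular_conj_pow_diag[OF carrier_Gr[OF T_in] carrier_Gr[OF Ti_in]
        carrier_Gr[OF A_square_in] upper_triangular_Gr[OF T_in] upper_triangular_Gr[OF Ti_in]
        TTi sU s i T_conj_A_square u]
      diag_inv[OF T_in, of "i + s"] i
    by (simp add: inv_T)
  moreover have "T $$ (i + s, i + s) \<noteq> 0" using diag_nonzero[OF T_in] i by simp
  ultimately show ?thesis by (simp add: field_simps)
qed

text \<open>Squaring removes the signs coming from A, whose diagonal entries are 1 or -1, and leaves
  a power of T_ii / T_(i+s)(i+s) = m.\<close>

lemma diag_apow_tpow_ratio:
  assumes s: "s \<ge> 1" and i: "i + s < n" and sU: "unipotent_depth n s (A * A)"
    and u: "(A * A) $$ (i, i + s) \<noteq> 0" and h: "h = apow j \<odot> tpow e"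
  shows "h $$ (i,i) * h $$ (i,i) * ((ginv h) $$ (i + s, i + s) * (ginv h) $$ (i + s, i + s))
    = of_nat m powi (2 * e)"
proof -
  define i' where "i' = i + s"
  have ii: "i < n" "i' < n" using i unfolding i'_def by auto
  have diag_h: "h $$ (p,p) = A $$ (p,p) powi j * T $$ (p,p) powi e" if "p < n" for p
    unfolding h using diag_mult[OF apow_in tpow_in that] diag_int_pow[OF A_in that]
      diag_int_pow[OF T_in that] by simp
  define eps eps' lam lam' where "eps = A $$ (i,i)" and "eps' = A $$ (i',i')"
    and "lam = T $$ (i,i)" and "lam' = T $$ (i',i')"
  have lam: "lam = of_nat m * lam'"
    unfolding lam_def lam'_def i'_def by (rule T_diag_ratio[OF s i sU u])
  have l0: "lam' \<noteq> 0" unfolding lam'_def by (rule diag_nonzero[OF T_in ii(2)])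
  have ee: "eps powi j * eps powi j = 1" "eps' powi j * eps' powi j = 1"
    using diag_A_square ii unfolding eps_def eps'_def power_int_mult_distrib[symmetric] by simp_all
  have "h $$ (i,i) * h $$ (i,i) = (eps powi j * eps powi j) * (lam powi e * lam powi e)"
    unfolding diag_h[OF ii(1)] eps_def lam_def by (simp add: mult_ac)
  hence xx: "h $$ (i,i) * h $$ (i,i) = (lam * lam) powi e" using ee by (simp add: power_int_mult_distrib)
  have hc: "h \<in> carrier Gr" unfolding h by (simp add: apow_in tpow_in)
  have "(ginv h) $$ (i',i') = inverse (eps' powi j * lam' powi e)"
    unfolding diag_inv[OF hc ii(2)] diag_h[OF ii(2)] eps'_def lam'_def ..
  hence "(ginv h) $$ (i',i') * (ginv h) $$ (i',i')
      = inverse ((eps' powi j * eps' powi j) * (lam' powi e * lam' powi e))"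
    by (simp add: mult_ac)
  hence yy: "(ginv h) $$ (i',i') * (ginv h) $$ (i',i') = inverse ((lam' * lam') powi e)"
    using ee by (simp add: power_int_mult_distrib)
  have "(lam * lam) powi e * inverse ((lam' * lam') powi e)
      = (of_nat m * of_nat m) powi e * ((lam' * lam') powi e * inverse ((lam' * lam') powi e))"
    unfolding lam by (simp add: power_int_mult_distrib mult_ac)
  also have "\<dots> = (of_nat m powi 2) powi e" using l0 by (simp add: power2_eq_square)
  finally show ?thesis unfolding xx yy i'_def[symmetric] by (simp add: power_int_mult)
qed

lemma cong_one_diag_exponent:
  assumes s: "s \<ge> 1" and i: "i + s < n" and sU: "unipotent_depth n s (A * A)"
    and u: "(A * A) $$ (i, i + s) \<noteq> 0" and c: "cong_one N (apow j \<odot> tpow e)"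
  shows "zinv_dvd m N (of_nat m powi (2 * e) - 1)"
proof -
  define h where "h = apow j \<odot> tpow e"
  have h: "h \<in> carrier Gr" "ginv h \<in> carrier Gr" unfolding h_def by (simp_all add: apow_in tpow_in)
  define x y where "x = h $$ (i,i)" and "y = (ginv h) $$ (i + s, i + s)"
  have cx: "zinv_dvd m N (x - 1)"
    using cong_one_entry[OF c, of i i] i unfolding x_def h_def by simp
  have cy: "zinv_dvd m N (y - 1)"
    using cong_one_entry[OF cong_one_inv[OF h(1)], of N "i + s" "i + s"] c i unfolding y_def h_def by simp
  have zx: "x \<in> zinv m" and zy: "y \<in> zinv m"
    using entries_Gr[OF h(1)] entries_Gr[OF h(2)] i unfolding entries_in_def x_def y_def by auto
  have "zinv_dvd m N (x * x * (y * y) - 1)"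
    using zinv_dvd_mult_minus_one[OF m_pos zinv_mult[OF zx zx]
        zinv_dvd_mult_minus_one[OF m_pos zx cx cx] zinv_dvd_mult_minus_one[OF m_pos zy cy cy]] .
  thus ?thesis using diag_apow_tpow_ratio[OF s i sU u h_def] unfolding x_def y_def by simp
qed

lemma cong_one_commutator:
  assumes c: "cong_one N (apow j \<odot> tpow e)"
  shows "cong_one N (apow (j - j * int m))"
proof -
  define h where "h = apow j \<odot> tpow e"
  have h: "h \<in> carrier Gr" unfolding h_def by (simp add: apow_in tpow_in)
  have ch: "cong_one N h" using c unfolding h_def .
  have "cong_one N (T \<odot> ginv h \<odot> ginv T)"
    by (rule cong_one_conj[OF grp.inv_closed[OF h] T_in cong_one_inv[OF h ch]])
  hence "cong_one N (h \<odot> (T \<odot> ginv h \<odot> ginv T))"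
    using h T_in by (intro cong_one_mult[OF h _ ch]) auto
  also have "h \<odot> (T \<odot> ginv h \<odot> ginv T)
      = h \<odot> T \<odot> ginv h \<odot> ginv T"
    using h T_in by (simp add: grp.m_assoc)
  also have "\<dots> = apow (j - j * int m)" unfolding h_def by (rule commutator_T)
  finally show ?thesis .
qed

lemma cong_one_A_nat_pow:
  assumes c: "cong_one N (apow k)" shows "cong_one N (A [^]\<^bsub>Gr\<^esub> nat \<bar>k\<bar>)"
proof (cases "k \<ge> 0")
  case True thus ?thesis using c by (simp flip: int_pow_int)
next
  case False
  hence "A [^]\<^bsub>Gr\<^esub> nat \<bar>k\<bar> = ginv (apow k)"
    using grp.int_pow_neg[OF A_in, of k] A_in by (simp flip: int_pow_int)
  thus ?thesis using cong_one_inv[OF apow_in c] by simp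
qed

lemma cong_one_A_square_entry:
  assumes s: "s \<ge> 1" and i: "i + s < n" and sU: "unipotent_depth n s (A * A)"
    and c: "cong_one N (A [^]\<^bsub>Gr\<^esub> (K::nat))"
  shows "zinv_dvd m N (of_nat K * (A * A) $$ (i, i + s))"
proof -
  have AK: "A [^]\<^bsub>Gr\<^esub> K \<in> carrier Gr" by (simp add: A_in)
  have "(A * A) ^\<^sub>m K = (A \<odot> A) [^]\<^bsub>Gr\<^esub> K"
    using nat_pow_Gr[OF A_square_in] by (simp add: mult_Gr)
  also have "\<dots> = A [^]\<^bsub>Gr\<^esub> K \<odot> A [^]\<^bsub>Gr\<^esub> K"
    by (simp add: grp.pow_mult_distrib A_in)
  finally have "cong_one N ((A * A) ^\<^sub>m K)" using cong_one_mult[OF AK AK c c] by simp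
  hence "zinv_dvd m N (((A * A) ^\<^sub>m K) $$ (i, i + s) - 0)"
    using cong_one_entry[of N _ i "i + s"] i s by fastforce
  thus ?thesis using unipotent_depth_pow_entry[OF s carrier_Gr[OF A_square_in] sU i, of K] by simp
qed

lemma cong_one_exponent_dvd:
  assumes D: "D > 0" and N: "N > 0" and N1: "m ^ (2 * D) - 1 dvd N"
    and c: "cong_one N (apow j \<odot> tpow e)"
  shows "int D dvd e"
proof -
  obtain s i where s: "s \<ge> 1" "i + s < n" "unipotent_depth n s (A * A)" "(A * A) $$ (i, i + s) \<noteq> 0"
    using A_square_depth by blast
  have m1: "m > 1" and mm: "m ^ 2 \<ge> 2" using m2 power_increasing[of 1 2 m] by auto
  have N1_pos: "m ^ (2 * D) - 1 > 0" using one_less_power[OF m1, of "2 * D"] D by simp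
  have "zinv_dvd m N (of_nat m powi (2 * e) - 1)" by (rule cong_one_diag_exponent[OF s c])
  hence "zinv_dvd m (m ^ (2 * D) - 1) (of_nat m powi (2 * e) - 1)" by (rule zinv_dvd_trans[OF N _ N1])
  hence "int (m ^ (2 * D) - 1) dvd int m ^ nat \<bar>2 * e\<bar> - 1"
    using zinv_dvd_power_int_minus_one[OF m1 N1_pos coprime_power_minus_one[OF m1]] D by simp
  moreover have "nat \<bar>2 * e\<bar> = 2 * nat \<bar>e\<bar>" by (simp add: abs_mult nat_mult_distrib)
  moreover have "1 \<le> m ^ k" for k using m1 by simp
  ultimately have "int (m ^ (2 * D) - 1) dvd int (m ^ (2 * nat \<bar>e\<bar>) - 1)" by (simp add: of_nat_diff)
  hence "m ^ (2 * D) - 1 dvd m ^ (2 * nat \<bar>e\<bar>) - 1" by (simp only: int_dvd_int_iff)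
  hence "(m ^ 2) ^ D - 1 dvd (m ^ 2) ^ nat \<bar>e\<bar> - 1" by (simp add: power_mult)
  hence "D dvd nat \<bar>e\<bar>" using power_minus_one_dvd_imp_dvd[OF mm D] by blast
  hence "int D dvd int (nat \<bar>e\<bar>)" by (simp only: int_dvd_int_iff)
  thus ?thesis by simp
qed

lemma cong_one_a_exponent_dvd:
  assumes s: "s \<ge> 1" "i + s < n" "unipotent_depth n s (A * A)"
    and u: "(A * A) $$ (i, i + s) = of_int a / of_nat m ^ t" and a: "a \<noteq> 0"
    and dec: "int D * ((int m - 1) * \<bar>a\<bar>) = int N' * int M" and M: "M dvd m ^ R"
    and N: "N > 0" and N': "N' dvd N" and c: "cong_one N (apow j \<odot> tpow e)"
  shows "\<exists>r. int D dvd j * int m ^ r"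
proof -
  define K where "K = nat \<bar>j - j * int m\<bar>"
  have "zinv_dvd m N (of_nat K * (A * A) $$ (i, i + s))"
    unfolding K_def
    by (rule cong_one_A_square_entry[OF s cong_one_A_nat_pow[OF cong_one_commutator[OF c]]])
  hence "zinv_dvd m N' (of_int (int K * a) / of_nat m ^ t)" unfolding u
    by (intro zinv_dvd_trans[OF N _ N']) simp
  moreover have "N' > 0" using N N' by (auto intro: Nat.gr0I)
  ultimately obtain r where "int N' dvd int K * a * int m ^ r"
    using zinv_dvd_imp_int_dvd m_pos by blast
  moreover have "\<bar>int K * a\<bar> = \<bar>j * ((int m - 1) * \<bar>a\<bar>)\<bar>"
  proof -
    have "j - j * int m = j * (1 - int m)" by (simp add: algebra_simps)
    hence "int K = \<bar>j\<bar> * (int m - 1)" using m2 unfolding K_def by (simp add: abs_mult)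
    thus ?thesis using m2 by (simp add: abs_mult)
  qed
  hence "\<bar>int K * a * int m ^ r\<bar> = \<bar>j * ((int m - 1) * \<bar>a\<bar>) * int m ^ r\<bar>"
    by (simp add: abs_mult)
  ultimately have "int N' dvd j * ((int m - 1) * \<bar>a\<bar>) * int m ^ r"
    by (metis dvd_abs_iff)
  moreover have "(int m - 1) * \<bar>a\<bar> \<noteq> 0" using a m2 by simp
  ultimately show ?thesis using dvd_cancel_prime_to_part[OF dec M] by blast
qed

lemma cong_subgroup_subset_of_exponents:
  assumes H: "subgroup H Gr" and pow: "\<forall>x\<in>carrier Gr. x [^]\<^bsub>Gr\<^esub> (D::nat) \<in> H"
    and exps: "\<And>j e. cong_one N (apow j \<odot> tpow e) \<Longrightarrow> int D dvd e \<and> (\<exists>r. int D dvd j * int m ^ r)"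
  shows "cong_subgroup m n N \<Gamma> \<subseteq> H"
proof
  fix g assume "g \<in> cong_subgroup m n N \<Gamma>"
  hence g: "g \<in> carrier Gr" and cg: "cong_one N g" by (simp_all add: cong_subgroup_iff Gr_simps)
  obtain k j b where gnf: "g = nf k j b" using normal_form[OF g] by blast
  have "tpow (int k) \<odot> g \<odot> ginv (tpow (int k)) = apow j \<odot> tpow (b - int k)"
    unfolding gnf tpow_conj_nf[symmetric] grp.int_pow_neg[OF T_in] ..
  hence "cong_one N (apow j \<odot> tpow (b - int k))"
    using cong_one_conj[OF g tpow_in[of "int k"] cg] by simp
  then obtain r where "int D dvd b - int k" "int D dvd j * int m ^ r" using exps by blast
  thus "g \<in> H" unfolding gnf nf_split
    by (intro subgroup.m_closed[OF H] conj_apow_in_subgroup[OF H pow] tpow_in_subgroup[OF H pow])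
qed

lemma cong_subgroup_subset:
  assumes H: "subgroup H Gr" and D: "D > 0" and pow: "\<forall>x\<in>carrier Gr. x [^]\<^bsub>Gr\<^esub> (D::nat) \<in> H"
  shows "\<exists>N>0. coprime N m \<and> cong_subgroup m n N \<Gamma> \<subseteq> H"
proof -
  obtain s i where s: "s \<ge> 1" "i + s < n" "unipotent_depth n s (A * A)"
    and u0: "(A * A) $$ (i, i + s) \<noteq> 0"
    using A_square_depth by blast
  have "(A * A) $$ (i, i + s) \<in> zinv m"
    using entries_Gr[OF A_square_in] s(2) by (simp add: entries_in_def)
  then obtain a t where u: "(A * A) $$ (i, i + s) = of_int a / of_nat m ^ t" by (rule zinvE)
  hence a: "a \<noteq> 0" using u0 by auto
  have "D * (m - 1) * nat \<bar>a\<bar> > 0" using D m2 a by auto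
  then obtain N' M R where dec: "D * (m - 1) * nat \<bar>a\<bar> = N' * M" and cop': "coprime N' m"
    and M: "M dvd m ^ R" using coprime_part_decomp by blast
  have dec': "int D * ((int m - 1) * \<bar>a\<bar>) = int N' * int M"
    using arg_cong[OF dec, of int] m2 by (simp add: of_nat_diff mult.assoc)
  define N where "N = (m ^ (2 * D) - 1) * N'"
  have N: "N > 0" using dec \<open>D * (m - 1) * nat \<bar>a\<bar> > 0\<close> one_less_power[of m "2 * D"] D m2
    unfolding N_def by auto
  have "coprime N m"
    unfolding N_def using cop' coprime_power_minus_one[of m "2 * D"] D m2 by simp
  moreover have "cong_subgroup m n N \<Gamma> \<subseteq> H"
  proof (rule cong_subgroup_subset_of_exponents[OF H pow])
    fix j e assume c: "cong_one N (apow j \<odot> tpow e)"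
    show "int D dvd e \<and> (\<exists>r. int D dvd j * int m ^ r)"
      using cong_one_exponent_dvd[OF D N _ c] cong_one_a_exponent_dvd[OF s u a dec' M N _ c]
      by (simp add: N_def)
  qed
  ultimately show ?thesis using N by blast
qed

theorem has_CSP: "has_CSP m n \<Gamma>"
  unfolding has_CSP_def
proof (intro allI impI)
  fix H assume "subgroup H Gr \<and> finite (rcosets\<^bsub>Gr\<^esub> H)"
  hence H: "subgroup H Gr" and "finite (rcosets\<^bsub>Gr\<^esub> H)" by auto
  then obtain D :: nat where "D > 0" "\<forall>x\<in>carrier Gr. x [^]\<^bsub>Gr\<^esub> D \<in> H"
    using finite_index_subgroup_contains_powers[OF group_Gr] by blast
  with H show "\<exists>N>0. coprime N m \<and> cong_subgroup m n N \<Gamma> \<subseteq> H" by (rule cong_subgroup_subset)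
qed

end

theorem theorem1p5:
  fixes m n :: nat and A Ai T Ti :: "rat mat"
  assumes "m \<ge> 2" and "n \<ge> 1"
    and "A \<in> Tn_zinv m n" and "T \<in> Tn_zinv m n"
    and "Ai \<in> carrier_mat n n" and "A * Ai = 1\<^sub>m n" and "Ai * A = 1\<^sub>m n"
    and "Ti \<in> carrier_mat n n" and "T * Ti = 1\<^sub>m n" and "Ti * T = 1\<^sub>m n"
    and hom: "T * A * Ti = A ^\<^sub>m m"
    and inj: "\<forall>w. word_eval n A Ai T Ti w = 1\<^sub>m n \<longrightarrow> bs_eq m w []"
  shows "has_CSP m n (range (word_eval n A Ai T Ti))"
proof -
  interpret bs_rep m n A Ai T Ti
    using assms by unfold_locales
  show ?thesis by (rule has_CSP)
qed

end
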